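(* Let $G$ be a uniformly dense graph with at least one edge and maximum degree $\Delta(G)$. Then $G$ is $(\rho(G)/\Delta(G))$-tough. If, furthermore, $G$ is regular and connected, then $G$ is $1$-tough.
   Context: Graphs are finite and simple (no loops, no multiple edges). The cycle matroid $M(G)$ has ground set $E$ and bases the spanning trees (maximal acyclic edge subsets). For $A\subseteq E$, $c(A)$ is the number of connected components of the graph $(V,A)$, and $\operatorname{rank}(A)=|V|-c(A)$. The density of $G$ is $\rho(G)=|E|/\operatorname{rank}(E)$. $G$ is uniformly dense if $|A|/\operatorname{rank}(A)\le\rho(G)$ for every nonempty $A\subseteq E$. A graph is $t$-tough if for every set $U$ of $k$ vertices, removing $U$ (and its incident edges) increases the number of connected components by at most $k/t$; the complete graph is considered $t$-tough for every $t$. *)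

theory Defs
  imports Complex_Main
begin

definition simple_graph :: "'a set \<Rightarrow> 'a set set \<Rightarrow> bool" where
  "simple_graph V E \<longleftrightarrow> finite V \<and> (\<forall>e\<in>E. \<exists>u v. u \<in> V \<and> v \<in> V \<and> u \<noteq> v \<and> e = {u, v})"

definition reach :: "'a set \<Rightarrow> 'a set set \<Rightarrow> ('a \<times> 'a) set" where
  "reach V A = ({(u, v). u \<in> V \<and> v \<in> V \<and> {u, v} \<in> A})\<^sup>* \<inter> (V \<times> V)"

definition ncomp :: "'a set \<Rightarrow> 'a set set \<Rightarrow> nat" where
  "ncomp V A = card (V // reach V A)"

text \<open>Rank in the cycle matroid: rank(A) = |V| - c(A).\<close>
definition mrank :: "'a set \<Rightarrow> 'a set set \<Rightarrow> nat" where
  "mrank V A = card V - ncomp V A"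

definition density :: "'a set \<Rightarrow> 'a set set \<Rightarrow> real" where
  "density V E = real (card E) / real (mrank V E)"

definition uniformly_dense :: "'a set \<Rightarrow> 'a set set \<Rightarrow> bool" where
  "uniformly_dense V E \<longleftrightarrow>
     (\<forall>A. A \<subseteq> E \<and> A \<noteq> {} \<longrightarrow> real (card A) / real (mrank V A) \<le> density V E)"

definition degree :: "'a set set \<Rightarrow> 'a \<Rightarrow> nat" where
  "degree E v = card {e \<in> E. v \<in> e}"

definition max_degree :: "'a set \<Rightarrow> 'a set set \<Rightarrow> nat" where
  "max_degree V E = Max (degree E ` V)"

definition regular :: "'a set \<Rightarrow> 'a set set \<Rightarrow> bool" where
  "regular V E \<longleftrightarrow> (\<forall>u\<in>V. \<forall>v\<in>V. degree E u = degree E v)"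

definition connected_graph :: "'a set \<Rightarrow> 'a set set \<Rightarrow> bool" where
  "connected_graph V E \<longleftrightarrow> ncomp V E = 1"

definition complete_graph :: "'a set \<Rightarrow> 'a set set \<Rightarrow> bool" where
  "complete_graph V E \<longleftrightarrow> (\<forall>u\<in>V. \<forall>v\<in>V. u \<noteq> v \<longrightarrow> {u, v} \<in> E)"

definition del_edges :: "'a set set \<Rightarrow> 'a set \<Rightarrow> 'a set set" where
  "del_edges E U = {e \<in> E. e \<inter> U = {}}"

definition tough :: "'a set \<Rightarrow> 'a set set \<Rightarrow> real \<Rightarrow> bool" where
  "tough V E t \<longleftrightarrow> complete_graph V E \<or>
     (\<forall>U. U \<subseteq> V \<longrightarrow>
        real (ncomp (V - U) (del_edges E U)) - real (ncomp V E) \<le> real (card U) / t)"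

end

theory Submission
  imports Defs
begin

text \<open>Deleting a vertex set U leaves the edge set A of edges avoiding U, and in the graph (V, A)
  the vertices of U are isolated, so rank(A) = |V| - c(G - U) - |U|. Uniform density gives
  |A| \<le> \<rho> rank(A), while |E| = \<rho> rank(E) = \<rho> (|V| - c(G)); subtracting,
  \<rho> (c(G - U) + |U| - c(G)) \<le> |E - A| \<le> \<Sum>u\<in>U. deg u \<le> |U| \<Delta>.
  For a connected d-regular graph the handshake lemma gives d |V| = 2 |E| = 2 \<rho> (|V| - 1),
  so d \<le> 2 \<rho> and the same inequality yields c(G - U) - 1 \<le> |U|.\<close>

definition edge_rel :: "'a set set \<Rightarrow> ('a \<times> 'a) set" where
  "edge_rel A = {(u, v). {u, v} \<in> A}"

lemma reach_eq_rtrancl_edge_rel: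
  assumes "\<Union>A \<subseteq> V"
  shows "reach V A = (edge_rel A)\<^sup>* \<inter> V \<times> V"
proof -
  have "{(u, v). u \<in> V \<and> v \<in> V \<and> {u, v} \<in> A} = edge_rel A"
    using assms by (auto simp: edge_rel_def)
  then show ?thesis
    unfolding reach_def by simp
qed

lemma rtrancl_edge_rel_in_Union: "(x, y) \<in> (edge_rel A)\<^sup>* \<Longrightarrow> y = x \<or> y \<in> \<Union>A"
  by (induction rule: rtrancl_induct) (auto simp: edge_rel_def)

lemma rtrancl_edge_rel_Image_isolated:
  assumes "x \<notin> \<Union>A"
  shows "(edge_rel A)\<^sup>* `` {x} = {x}"
proof -
  have "y = x" if "(x, y) \<in> (edge_rel A)\<^sup>*" for y
    using that
  proof (cases rule: converse_rtranclE)
    case (step z)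
    then show ?thesis
      using assms by (auto simp: edge_rel_def)
  qed simp
  then show ?thesis
    by auto
qed

lemma quotient_reach:
  assumes "\<Union>A \<subseteq> V"
  shows "V // reach V A = (\<lambda>x. (edge_rel A)\<^sup>* `` {x}) ` V"
proof -
  have "reach V A `` {x} = (edge_rel A)\<^sup>* `` {x}" if "x \<in> V" for x
    using that assms
    by (fastforce simp: reach_eq_rtrancl_edge_rel[OF assms] dest: rtrancl_edge_rel_in_Union)
  then show ?thesis
    unfolding quotient_def by auto
qed

lemma ncomp_le_card: "finite V \<Longrightarrow> ncomp V A \<le> card V"
  unfolding ncomp_def quotient_def by (metis UNION_singleton_eq_range card_image_le)

lemma real_mrank: "finite V \<Longrightarrow> real (mrank V A) = real (card V) - real (ncomp V A)"
  by (simp add: mrank_def ncomp_le_card)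

lemma ncomp_less_card:
  assumes "finite V" "\<Union>A \<subseteq> V" "{u, v} \<in> A" "u \<noteq> v"
  shows "ncomp V A < card V"
proof -
  define comp where "comp x = (edge_rel A)\<^sup>* `` {x}" for x
  have "u \<in> V" "v \<in> V"
    using assms(2,3) by auto
  have "(u, v) \<in> edge_rel A" "(v, u) \<in> edge_rel A"
    using assms(3) by (auto simp: edge_rel_def insert_commute)
  then have "comp u = comp v"
    unfolding comp_def by (auto intro: rtrancl_trans)
  then have "comp ` V = comp ` (V - {v})"
    using \<open>u \<in> V\<close> \<open>u \<noteq> v\<close> by (auto simp: image_iff)
  then have "ncomp V A \<le> card (V - {v})"
    unfolding ncomp_def quotient_reach[OF assms(2)] comp_def[abs_def]
    by (metis assms(1) card_image_le finite_Diff)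
  also have "\<dots> < card V"
    using assms(1) \<open>v \<in> V\<close> by (rule card_Diff1_less)
  finally show ?thesis .
qed

lemma ncomp_isolated_vertices:
  assumes "finite V" "U \<subseteq> V" "\<Union>A \<subseteq> V - U"
  shows "ncomp V A = ncomp (V - U) A + card U"
proof -
  define comp where "comp x = (edge_rel A)\<^sup>* `` {x}" for x
  have "\<Union>A \<subseteq> V"
    using assms(3) by blast
  have isolated: "comp u = {u}" if "u \<in> U" for u
  proof -
    have "u \<notin> \<Union>A"
      using that assms(3) by blast
    then show ?thesis
      unfolding comp_def by (rule rtrancl_edge_rel_Image_isolated)
  qed
  have "comp x \<noteq> comp u" if "x \<in> V - U" "u \<in> U" for x u
  proof
    assume "comp x = comp u"
    moreover have "x \<in> comp x"
      unfolding comp_def by blast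
    ultimately show False
      using isolated[OF \<open>u \<in> U\<close>] \<open>x \<in> V - U\<close> \<open>u \<in> U\<close> by simp
  qed
  then have "comp ` (V - U) \<inter> comp ` U = {}"
    by blast
  moreover have "comp ` V = comp ` (V - U) \<union> comp ` U"
    using assms(2) by blast
  moreover have "finite U"
    using assms(1,2) by (rule finite_subset[rotated])
  ultimately have "card (comp ` V) = card (comp ` (V - U)) + card (comp ` U)"
    using assms(1) by (simp add: card_Un_disjoint)
  moreover have "card (comp ` U) = card U"
    using isolated card_image[of "\<lambda>u. {u}" U] by (simp add: inj_on_def)
  moreover have "ncomp V A = card (comp ` V)" "ncomp (V - U) A = card (comp ` (V - U))"
    unfolding ncomp_def comp_def[abs_def]
    by (simp_all only: quotient_reach \<open>\<Union>A \<subseteq> V\<close> assms(3))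
  ultimately show ?thesis
    by simp
qed

lemma simple_graph_edgeE:
  assumes "simple_graph V E" "e \<in> E"
  obtains u v where "u \<in> V" "v \<in> V" "u \<noteq> v" "e = {u, v}"
  using assms unfolding simple_graph_def by meson

lemma simple_graph_Union_subset: "simple_graph V E \<Longrightarrow> \<Union>E \<subseteq> V"
  by (blast elim: simple_graph_edgeE)

lemma simple_graph_finite_edges:
  assumes "simple_graph V E"
  shows "finite E"
proof -
  have "E \<subseteq> Pow V"
    using simple_graph_Union_subset[OF assms] by blast
  moreover have "finite V"
    using assms by (simp add: simple_graph_def)
  ultimately show ?thesis
    by (simp add: finite_subset)
qed

lemma simple_graph_subset: "simple_graph V E \<Longrightarrow> A \<subseteq> E \<Longrightarrow> simple_graph V A"
  unfolding simple_graph_def by (meson subsetD)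

lemma simple_graph_mrank_pos:
  assumes "simple_graph V E" "E \<noteq> {}"
  shows "0 < mrank V E"
proof -
  obtain e where "e \<in> E"
    using assms(2) by blast
  then obtain u v where "u \<noteq> v" "{u, v} \<in> E"
    using assms(1) by (metis simple_graph_edgeE)
  moreover have "finite V"
    using assms(1) by (simp add: simple_graph_def)
  ultimately have "ncomp V E < card V"
    using simple_graph_Union_subset[OF assms(1)] by (intro ncomp_less_card)
  then show ?thesis
    by (simp add: mrank_def)
qed

lemma density_mult_mrank:
  assumes "simple_graph V E"
  shows "density V E * real (mrank V E) = real (card E)"
  using simple_graph_mrank_pos[OF assms] by (cases "E = {}") (simp_all add: density_def)

lemma density_pos:
  assumes "simple_graph V E" "E \<noteq> {}"
  shows "0 < density V E"
proof -
  have "0 < card E"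
    using assms simple_graph_finite_edges by (simp add: card_gt_0_iff)
  then show ?thesis
    using simple_graph_mrank_pos[OF assms] by (simp add: density_def)
qed

lemma uniformly_dense_card_le:
  assumes "simple_graph V E" "uniformly_dense V E" "A \<subseteq> E"
  shows "real (card A) \<le> density V E * real (mrank V A)"
proof (cases "A = {}")
  case False
  have "0 < mrank V A"
    using simple_graph_mrank_pos[OF simple_graph_subset[OF assms(1,3)] False] .
  moreover have "real (card A) / real (mrank V A) \<le> density V E"
    using assms(2,3) False unfolding uniformly_dense_def by blast
  ultimately show ?thesis
    by (simp add: pos_divide_le_eq)
qed (simp add: density_def)

lemma card_incident_edges_le_sum_degree:
  assumes "finite U"
  shows "card (E - del_edges E U) \<le> (\<Sum>u\<in>U. degree E u)"
proof -
  have "E - del_edges E U = (\<Union>u\<in>U. {e \<in> E. u \<in> e})"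
    by (auto simp: del_edges_def)
  also have "card \<dots> \<le> (\<Sum>u\<in>U. degree E u)"
    unfolding degree_def using assms by (rule card_UN_le)
  finally show ?thesis .
qed

lemma degree_le_max_degree: "finite V \<Longrightarrow> v \<in> V \<Longrightarrow> degree E v \<le> max_degree V E"
  unfolding max_degree_def by simp

lemma max_degree_pos:
  assumes "simple_graph V E" "E \<noteq> {}"
  shows "0 < max_degree V E"
proof -
  obtain e where "e \<in> E"
    using assms(2) by blast
  then obtain u v where "u \<in> V" "{u, v} \<in> E"
    using assms(1) by (metis simple_graph_edgeE)
  then have "0 < degree E u"
    using simple_graph_finite_edges[OF assms(1)] by (auto simp: degree_def card_gt_0_iff)
  also have "\<dots> \<le> max_degree V E"
    using assms(1) \<open>u \<in> V\<close> by (simp add: degree_le_max_degree simple_graph_def)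
  finally show ?thesis .
qed

lemma handshake:
  assumes "simple_graph V E"
  shows "(\<Sum>v\<in>V. degree E v) = 2 * card E"
proof -
  have "finite V" "finite E"
    using assms simple_graph_finite_edges by (auto simp: simple_graph_def)
  have ends: "(\<Sum>v\<in>V. if v \<in> e then 1 else 0) = (2::nat)" if "e \<in> E" for e
  proof -
    obtain a b where "a \<in> V" "b \<in> V" "a \<noteq> b" "e = {a, b}"
      using assms \<open>e \<in> E\<close> by (rule simple_graph_edgeE)
    then have "V \<inter> e = {a, b}"
      by blast
    then show ?thesis
      using \<open>finite V\<close> \<open>a \<noteq> b\<close> by (simp add: sum.If_cases)
  qed
  have "(\<Sum>v\<in>V. degree E v) = (\<Sum>v\<in>V. \<Sum>e\<in>E. if v \<in> e then 1 else 0)"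
    using \<open>finite E\<close> by (simp add: degree_def sum.If_cases Int_def)
  also have "\<dots> = (\<Sum>e\<in>E. \<Sum>v\<in>V. if v \<in> e then 1 else 0)"
    by (rule sum.swap)
  also have "\<dots> = 2 * card E"
    using ends by simp
  finally show ?thesis .
qed

lemma uniformly_dense_ncomp_del_edges_le:
  assumes "simple_graph V E" "uniformly_dense V E" "U \<subseteq> V"
  shows "density V E *
           (real (ncomp (V - U) (del_edges E U)) + real (card U) - real (ncomp V E))
         \<le> (\<Sum>u\<in>U. real (degree E u))"
proof -
  define A where "A = del_edges E U"
  have "finite V" "finite E" "\<Union>E \<subseteq> V"
    using assms(1) simple_graph_finite_edges simple_graph_Union_subset
    by (auto simp: simple_graph_def)
  have "A \<subseteq> E"
    by (auto simp: A_def del_edges_def)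
  have "\<Union>A \<subseteq> V - U"
    using \<open>\<Union>E \<subseteq> V\<close> by (auto simp: A_def del_edges_def)
  then have ncomp_A: "ncomp V A = ncomp (V - U) A + card U"
    using \<open>finite V\<close> assms(3) by (intro ncomp_isolated_vertices)
  have "density V E * (real (ncomp (V - U) A) + real (card U) - real (ncomp V E))
        = density V E * real (mrank V E) - density V E * real (mrank V A)"
    by (simp add: ncomp_A real_mrank[OF \<open>finite V\<close>] algebra_simps)
  also have "\<dots> \<le> real (card E) - real (card A)"
    using density_mult_mrank[OF assms(1)] uniformly_dense_card_le[OF assms(1,2) \<open>A \<subseteq> E\<close>]
    by linarith
  also have "\<dots> = real (card (E - A))"
    using \<open>A \<subseteq> E\<close> \<open>finite E\<close> by (simp add: card_Diff_subset card_mono finite_subset of_nat_diff)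
  also have "\<dots> \<le> (\<Sum>u\<in>U. real (degree E u))"
    using card_incident_edges_le_sum_degree[of U E] finite_subset[OF assms(3) \<open>finite V\<close>]
    unfolding A_def by (metis of_nat_le_iff of_nat_sum)
  finally show ?thesis
    unfolding A_def .
qed

lemma uniformly_dense_tough:
  assumes "simple_graph V E" "E \<noteq> {}" "uniformly_dense V E"
  shows "tough V E (density V E / real (max_degree V E))"
  unfolding tough_def
proof (intro disjI2 allI impI)
  fix U assume "U \<subseteq> V"
  define \<rho> where "\<rho> = density V E"
  define \<Delta> where "\<Delta> = real (max_degree V E)"
  define increase where "increase = real (ncomp (V - U) (del_edges E U)) - real (ncomp V E)"
  have "0 < \<rho>" "0 < \<Delta>"
    using density_pos[OF assms(1,2)] max_degree_pos[OF assms(1,2)] unfolding \<rho>_def \<Delta>_def by simp_all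
  have "finite V"
    using assms(1) by (simp add: simple_graph_def)
  have "(\<Sum>u\<in>U. real (degree E u)) \<le> real (card U) * \<Delta>"
    using sum_bounded_above[of U "\<lambda>u. real (degree E u)" \<Delta>] degree_le_max_degree[OF \<open>finite V\<close>]
      \<open>U \<subseteq> V\<close> unfolding \<Delta>_def by (simp add: subset_iff)
  then have "\<rho> * increase + \<rho> * real (card U) \<le> real (card U) * \<Delta>"
    using uniformly_dense_ncomp_del_edges_le[OF assms(1,3) \<open>U \<subseteq> V\<close>]
    unfolding \<rho>_def increase_def by (simp add: algebra_simps)
  moreover have "0 \<le> \<rho> * real (card U)"
    using \<open>0 < \<rho>\<close> by simp
  ultimately have "\<rho> * increase \<le> real (card U) * \<Delta>"
    by linarith
  then show "increase \<le> real (card U) / (\<rho> / \<Delta>)"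
    using \<open>0 < \<rho>\<close> \<open>0 < \<Delta>\<close> by (simp add: field_simps)
qed

lemma regular_connected_degree_le:
  assumes "simple_graph V E" "regular V E" "connected_graph V E" "v \<in> V"
  shows "real (degree E v) \<le> 2 * density V E"
proof -
  define n where "n = real (card V)"
  have "finite V"
    using assms(1) by (simp add: simple_graph_def)
  then have "0 < n"
    using assms(4) by (auto simp: n_def card_gt_0_iff)
  have "degree E u = degree E v" if "u \<in> V" for u
    using assms(2,4) that unfolding regular_def by blast
  then have "(\<Sum>u\<in>V. degree E u) = (\<Sum>u\<in>V. degree E v)"
    by (rule sum.cong[OF refl])
  then have "card V * degree E v = 2 * card E"
    using handshake[OF assms(1)] by simp
  then have "n * real (degree E v) = 2 * real (card E)"
    unfolding n_def by (metis of_nat_mult of_nat_numeral)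
  also have "\<dots> = 2 * density V E * (n - 1)"
    using density_mult_mrank[OF assms(1)] assms(3)
    by (simp add: real_mrank[OF \<open>finite V\<close>] connected_graph_def n_def)
  also have "\<dots> \<le> 2 * density V E * n"
    by (intro mult_left_mono) (simp_all add: density_def)
  finally show ?thesis
    using \<open>0 < n\<close> by (simp add: mult.commute)
qed

lemma uniformly_dense_regular_connected_tough_one:
  assumes "simple_graph V E" "E \<noteq> {}" "uniformly_dense V E" "regular V E" "connected_graph V E"
  shows "tough V E 1"
  unfolding tough_def
proof (intro disjI2 allI impI)
  fix U assume "U \<subseteq> V"
  define \<rho> where "\<rho> = density V E"
  define c where "c = real (ncomp (V - U) (del_edges E U))"
  have "\<rho> * (c + real (card U) - 1) \<le> (\<Sum>u\<in>U. real (degree E u))"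
    using uniformly_dense_ncomp_del_edges_le[OF assms(1,3) \<open>U \<subseteq> V\<close>] assms(5)
    unfolding \<rho>_def c_def connected_graph_def by simp
  also have "\<dots> \<le> real (card U) * (2 * \<rho>)"
    using sum_bounded_above[of U "\<lambda>u. real (degree E u)" "2 * \<rho>"]
      regular_connected_degree_le[OF assms(1,4,5)] \<open>U \<subseteq> V\<close>
    unfolding \<rho>_def by (simp add: subset_iff)
  also have "\<dots> = \<rho> * (2 * real (card U))"
    by simp
  finally have "c + real (card U) - 1 \<le> 2 * real (card U)"
    using density_pos[OF assms(1,2)] unfolding \<rho>_def by (simp add: mult_le_cancel_left_pos)
  then show "c - real (ncomp V E) \<le> real (card U) / 1"
    using assms(5) by (simp add: connected_graph_def)
qed

theorem theorem3p13:
  fixes V :: "'a set" and E :: "'a set set"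
  assumes "simple_graph V E"
    and "E \<noteq> {}"
    and "uniformly_dense V E"
  shows "tough V E (density V E / real (max_degree V E)) \<and>
         (regular V E \<and> connected_graph V E \<longrightarrow> tough V E 1)"
  using uniformly_dense_tough[OF assms] uniformly_dense_regular_connected_tough_one[OF assms]
  by blast

end
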